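(* Let $G$ be a graph and $\ell\ge 2$. Then $\overline{G\cup K_1}$ is $N$-AW if and only if $G$ is $A$-AW.
   Context: All graphs are finite and simple; $\overline{H}$ is the complement of $H$ and $G\cup K_1$ is the disjoint union of $G$ with a single new vertex. Labels lie in $\mathbb{Z}_\ell$. In the neighborhood Lights Out game, toggling a vertex $v$ adds $1$ (mod $\ell$) to the label of every vertex of the closed neighborhood $N[v]$; in the adjacency Lights Out game, toggling $v$ adds $1$ to the label of every vertex of the open neighborhood $N(v)$ (and not to $v$ itself). A game is won when all labels are $0$. A graph is $N$-AW (resp. $A$-AW) if the neighborhood (resp. adjacency) game can be won from every initial labeling $V\to\mathbb{Z}_\ell$; equivalently $A+I$ (resp. the adjacency matrix $A$) is invertible over $\mathbb{Z}_\ell$. *)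

theory Defs
  imports "HOL-Number_Theory.Cong"
begin

definition simple_graph :: "'a set \<Rightarrow> ('a \<Rightarrow> 'a \<Rightarrow> bool) \<Rightarrow> bool" where
  "simple_graph V E \<longleftrightarrow> finite V \<and> (\<forall>u v. E u v \<longrightarrow> u \<in> V \<and> v \<in> V)
     \<and> (\<forall>u v. E u v \<longrightarrow> E v u) \<and> (\<forall>u. \<not> E u u)"

definition graph_compl :: "'a set \<Rightarrow> ('a \<Rightarrow> 'a \<Rightarrow> bool) \<Rightarrow> 'a set \<times> ('a \<Rightarrow> 'a \<Rightarrow> bool)" where
  "graph_compl V E = (V, \<lambda>u v. u \<in> V \<and> v \<in> V \<and> u \<noteq> v \<and> \<not> E u v)"

definition union_K1 :: "'a set \<Rightarrow> ('a \<Rightarrow> 'a \<Rightarrow> bool) \<Rightarrow> 'a option set \<times> ('a option \<Rightarrow> 'a option \<Rightarrow> bool)" where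
  "union_K1 V E = (insert None (Some ` V),
     \<lambda>x y. case (x, y) of (Some u, Some v) \<Rightarrow> E u v | _ \<Rightarrow> False)"

text \<open>Neighborhood Lights Out over Z_l: from every initial labeling b, there are toggle
  counts x (toggling v exactly x v times) making every label 0 mod l. Toggling v adds 1 to
  every vertex of N[v], so vertex u receives the toggles of all v in N[u].\<close>
definition N_AW :: "'a set \<Rightarrow> ('a \<Rightarrow> 'a \<Rightarrow> bool) \<Rightarrow> nat \<Rightarrow> bool" where
  "N_AW V E l \<longleftrightarrow> (\<forall>b :: 'a \<Rightarrow> int. \<exists>x :: 'a \<Rightarrow> nat. \<forall>u\<in>V.
     [b u + (\<Sum>v\<in>V. if v = u \<or> E v u then int (x v) else 0) = 0] (mod int l))"

text \<open>Adjacency Lights Out: toggling v adds 1 to every vertex of N(v).\<close>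
definition A_AW :: "'a set \<Rightarrow> ('a \<Rightarrow> 'a \<Rightarrow> bool) \<Rightarrow> nat \<Rightarrow> bool" where
  "A_AW V E l \<longleftrightarrow> (\<forall>b :: 'a \<Rightarrow> int. \<exists>x :: 'a \<Rightarrow> nat. \<forall>u\<in>V.
     [b u + (\<Sum>v\<in>V. if E v u then int (x v) else 0) = 0] (mod int l))"

end

theory Submission
  imports Defs
begin

text \<open>In the complement of \<open>G \<union> K\<^sub>1\<close> the new vertex is adjacent to every vertex of \<open>G\<close>, so
  its closed neighbourhood is everything and the closed neighbourhood of a vertex \<open>u\<close> of \<open>G\<close>
  is everything except \<open>N\<^sub>G(u)\<close>. Hence, writing \<open>T\<close> for the total number of toggles,
  the neighbourhood game asks for \<open>b\<^sub>0 + T = 0\<close> at the new vertex and \<open>b\<^sub>u + T - (A x)\<^sub>u = 0\<close>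
  at \<open>u\<close>. Subtracting, the toggles on \<open>G\<close> must win the adjacency game on \<open>G\<close> from
  \<open>b\<^sub>0 - b\<^sub>u\<close>; conversely, any such toggles extend to a win because the number of toggles
  of the new vertex only affects \<open>T\<close> and can be chosen freely modulo \<open>l\<close>. As every labeling of
  \<open>G\<close> has the form \<open>b\<^sub>0 - b\<^sub>u\<close>, the two games are universally winnable together.\<close>

definition N_winnable :: "'a set \<Rightarrow> ('a \<Rightarrow> 'a \<Rightarrow> bool) \<Rightarrow> nat \<Rightarrow> ('a \<Rightarrow> int) \<Rightarrow> bool" where
  "N_winnable V E l b \<longleftrightarrow> (\<exists>x :: 'a \<Rightarrow> nat. \<forall>u\<in>V.
     [b u + (\<Sum>v\<in>V. if v = u \<or> E v u then int (x v) else 0) = 0] (mod int l))"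

definition A_winnable :: "'a set \<Rightarrow> ('a \<Rightarrow> 'a \<Rightarrow> bool) \<Rightarrow> nat \<Rightarrow> ('a \<Rightarrow> int) \<Rightarrow> bool" where
  "A_winnable V E l b \<longleftrightarrow> (\<exists>x :: 'a \<Rightarrow> nat. \<forall>u\<in>V.
     [b u + (\<Sum>v\<in>V. if E v u then int (x v) else 0) = 0] (mod int l))"

lemma N_AW_iff_N_winnable: "N_AW V E l \<longleftrightarrow> (\<forall>b. N_winnable V E l b)"
  by (simp add: N_AW_def N_winnable_def)

lemma A_AW_iff_A_winnable: "A_AW V E l \<longleftrightarrow> (\<forall>b. A_winnable V E l b)"
  by (simp add: A_AW_def A_winnable_def)

abbreviation compl_union_K1 :: "'a set \<Rightarrow> ('a \<Rightarrow> 'a \<Rightarrow> bool) \<Rightarrow> 'a option set \<times> ('a option \<Rightarrow> 'a option \<Rightarrow> bool)"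
  where "compl_union_K1 V E \<equiv> graph_compl (fst (union_K1 V E)) (snd (union_K1 V E))"

lemma fst_compl_union_K1: "fst (compl_union_K1 V E) = insert None (Some ` V)"
  by (simp add: graph_compl_def union_K1_def)

lemma ball_compl_union_K1:
  "(\<forall>w\<in>fst (compl_union_K1 V E). P w) \<longleftrightarrow> P None \<and> (\<forall>u\<in>V. P (Some u))"
  by (simp add: fst_compl_union_K1)

lemma snd_compl_union_K1_None [simp]:
  "v \<in> V \<Longrightarrow> snd (compl_union_K1 V E) (Some v) None"
  "v \<in> V \<Longrightarrow> snd (compl_union_K1 V E) None (Some v)"
  by (simp_all add: graph_compl_def union_K1_def)

lemma snd_compl_union_K1_Some [simp]:
  "u \<in> V \<Longrightarrow> v \<in> V \<Longrightarrow> snd (compl_union_K1 V E) (Some v) (Some u) \<longleftrightarrow> v \<noteq> u \<and> \<not> E v u"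
  by (simp add: graph_compl_def union_K1_def)

lemma sum_insert_None_Some:
  "finite V \<Longrightarrow> (\<Sum>w\<in>insert None (Some ` V). f w) = f None + (\<Sum>v\<in>V. f (Some v))"
  by (simp add: sum.reindex)

lemma closed_nbhd_sum_compl_union_K1_None:
  fixes f :: "'a option \<Rightarrow> 'b :: comm_monoid_add"
  assumes "finite V"
  shows "(\<Sum>w\<in>fst (compl_union_K1 V E). if w = None \<or> snd (compl_union_K1 V E) w None then f w else 0)
    = f None + (\<Sum>v\<in>V. f (Some v))"
  unfolding fst_compl_union_K1 sum_insert_None_Some[OF assms] by simp

lemma closed_nbhd_sum_compl_union_K1_Some:
  fixes f :: "'a option \<Rightarrow> 'b :: ab_group_add"
  assumes "finite V" and "\<not> E u u" and "u \<in> V"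
  shows "(\<Sum>w\<in>fst (compl_union_K1 V E). if w = Some u \<or> snd (compl_union_K1 V E) w (Some u) then f w else 0)
    = f None + (\<Sum>v\<in>V. f (Some v)) - (\<Sum>v\<in>V. if E v u then f (Some v) else 0)"
proof -
  have "(\<Sum>v\<in>V. if v = u \<or> v \<noteq> u \<and> \<not> E v u then f (Some v) else 0)
      = (\<Sum>v\<in>V. f (Some v) - (if E v u then f (Some v) else 0))"
    using assms(2) by (intro sum.cong) auto
  then show ?thesis
    unfolding fst_compl_union_K1 sum_insert_None_Some[OF assms(1)] using assms(3)
    by (simp add: sum_subtractf)
qed

lemma N_winnable_compl_union_K1_iff:
  assumes "finite V" and irrefl: "\<And>u. \<not> E u u" and "l > 0"
  shows "N_winnable (fst (compl_union_K1 V E)) (snd (compl_union_K1 V E)) l b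
    \<longleftrightarrow> A_winnable V E l (\<lambda>u. b None - b (Some u))"
proof -
  let ?T = "\<lambda>x :: 'a option \<Rightarrow> nat. int (x None) + (\<Sum>v\<in>V. int (x (Some v)))"
  let ?A = "\<lambda>(y :: 'a \<Rightarrow> nat) u. \<Sum>v\<in>V. if E v u then int (y v) else 0"
  have N_winnable_iff: "N_winnable (fst (compl_union_K1 V E)) (snd (compl_union_K1 V E)) l b \<longleftrightarrow>
      (\<exists>x. [b None + ?T x = 0] (mod int l) \<and>
        (\<forall>u\<in>V. [b (Some u) + (?T x - ?A (\<lambda>v. x (Some v)) u) = 0] (mod int l)))"
    unfolding N_winnable_def ball_compl_union_K1
    by (simp add: closed_nbhd_sum_compl_union_K1_None[OF assms(1)]
        closed_nbhd_sum_compl_union_K1_Some[OF assms(1) irrefl])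
  show ?thesis
    unfolding N_winnable_iff
  proof
    assume "\<exists>x. [b None + ?T x = 0] (mod int l) \<and>
        (\<forall>u\<in>V. [b (Some u) + (?T x - ?A (\<lambda>v. x (Some v)) u) = 0] (mod int l))"
    then obtain x where root: "[b None + ?T x = 0] (mod int l)"
      and leaves: "\<forall>u\<in>V. [b (Some u) + (?T x - ?A (\<lambda>v. x (Some v)) u) = 0] (mod int l)"
      by blast
    have "[(b None - b (Some u)) + ?A (\<lambda>v. x (Some v)) u = 0] (mod int l)" if "u \<in> V" for u
      using cong_diff[OF root leaves[rule_format, OF that]] by (simp add: algebra_simps)
    then show "A_winnable V E l (\<lambda>u. b None - b (Some u))"
      unfolding A_winnable_def by (intro exI[of _ "\<lambda>v. x (Some v)"]) blast
  next
    assume "A_winnable V E l (\<lambda>u. b None - b (Some u))"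
    then obtain y where y: "\<forall>u\<in>V. [(b None - b (Some u)) + ?A y u = 0] (mod int l)"
      unfolding A_winnable_def by blast
    define S where "S = (\<Sum>v\<in>V. int (y v))"
    define x where "x w = (case w of None \<Rightarrow> nat ((- b None - S) mod int l) | Some v \<Rightarrow> y v)" for w
    have x_Some [simp]: "x (Some v) = y v" for v
      by (simp add: x_def)
    have "[int (x None) = - b None - S] (mod int l)"
      using \<open>l > 0\<close> by (simp add: x_def cong_def)
    then have root: "[b None + ?T x = 0] (mod int l)"
      by (simp add: S_def cong_iff_dvd_diff algebra_simps)
    have "[b (Some u) + (?T x - ?A (\<lambda>v. x (Some v)) u) = 0] (mod int l)" if "u \<in> V" for u
      using cong_diff[OF root y[rule_format, OF that]] by (simp add: algebra_simps cong: if_cong)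
    with root show "\<exists>x. [b None + ?T x = 0] (mod int l) \<and>
        (\<forall>u\<in>V. [b (Some u) + (?T x - ?A (\<lambda>v. x (Some v)) u) = 0] (mod int l))"
      by blast
  qed
qed

theorem theorem2p6:
  fixes V :: "'a set" and E :: "'a \<Rightarrow> 'a \<Rightarrow> bool" and l :: nat
  assumes "simple_graph V E" and "l \<ge> 2"
  shows "N_AW (fst (graph_compl (fst (union_K1 V E)) (snd (union_K1 V E))))
              (snd (graph_compl (fst (union_K1 V E)) (snd (union_K1 V E)))) l
         \<longleftrightarrow> A_AW V E l"
proof -
  have "finite V" and "\<And>u. \<not> E u u"
    using assms(1) by (auto simp: simple_graph_def)
  moreover have "l > 0"
    using assms(2) by simp
  ultimately have "N_AW (fst (compl_union_K1 V E)) (snd (compl_union_K1 V E)) l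
      \<longleftrightarrow> (\<forall>b. A_winnable V E l (\<lambda>u. b None - b (Some u)))"
    by (simp add: N_AW_iff_N_winnable N_winnable_compl_union_K1_iff)
  also have "\<dots> \<longleftrightarrow> (\<forall>b. A_winnable V E l b)"
  proof
    assume winnable: "\<forall>b. A_winnable V E l (\<lambda>u. b None - b (Some u))"
    show "\<forall>b. A_winnable V E l b"
    proof
      fix b :: "'a \<Rightarrow> int"
      show "A_winnable V E l b"
        using winnable[rule_format, of "case_option 0 (\<lambda>v. - b v)"] by simp
    qed
  qed auto
  finally show ?thesis
    by (simp add: A_AW_iff_A_winnable)
qed

end
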